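(* Let $m\ge 2$ be an integer and let $n$ be a positive integer with $m^j\le n<m^{j+1}$ for some integer $j\ge 0$, with base $m$ representation $n=\alpha_j m^j+\cdots+\alpha_1 m+\alpha_0$ ($\alpha_j>0$, $0\le\alpha_i\le m-1$). Then the number $b_m(n)$ of $m$-ary partitions of $n$ satisfies \[ b_m(n)=\sum_{k_j=0}^{\alpha_j}\ \sum_{k_{j-1}=0}^{\alpha_{j-1}+mk_j}\cdots\sum_{k_1=0}^{\alpha_1+mk_2}1, \] i.e. $b_m(n)$ is the number of integer tuples $(k_j,\ldots,k_1)$ with $0\le k_j\le\alpha_j$ and $0\le k_t\le \alpha_t+mk_{t+1}$ for $1\le t\le j-1$. In particular $b_m(n)=1$ when $j=0$.
   Context: An $m$-ary partition of a positive integer $n$ is a partition of $n$ in which every part is a power of $m$ (i.e. one of $1,m,m^2,\ldots$). $b_m(n)$ denotes the number of $m$-ary partitions of $n$. *)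

theory Defs
  imports Main "HOL-Library.Multiset"
begin

definition m_ary_partitions :: "nat \<Rightarrow> nat \<Rightarrow> nat multiset set" where
  "m_ary_partitions m n = {P. (\<forall>x\<in>#P. \<exists>i. x = m ^ i) \<and> sum_mset P = n}"

definition b :: "nat \<Rightarrow> nat \<Rightarrow> nat" where
  "b m n = card (m_ary_partitions m n)"

definition digit :: "nat \<Rightarrow> nat \<Rightarrow> nat \<Rightarrow> nat" where
  "digit m n i = n div m ^ i mod m"

end

theory Submission
  imports Defs
begin

text \<open>
  An m-ary partition of \<open>n < m ^ (j + 1)\<close> is determined by the multiplicities
  \<open>c i\<close> of its parts \<open>m ^ i\<close>, \<open>i \<le> j\<close>, subject to \<open>\<Sum>i\<le>j. c i * m ^ i = n\<close>.
  These vectors correspond to the tail values \<open>K t = \<Sum>i\<in>{t..j}. c i * m ^ (i - t)\<close>,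
  \<open>1 \<le> t \<le> j\<close>, which range exactly over the chains with \<open>m * K 1 \<le> n\<close> and
  \<open>m * K (t + 1) \<le> K t\<close>; the vector is recovered as \<open>c t = K t - m * K (t + 1)\<close>.
  Every \<open>K t\<close> is at most \<open>N t = n div m ^ t\<close>, and \<open>N t = \<alpha>\<^sub>t + m * N (t + 1)\<close>, so
  the complement \<open>k t = N t - K t\<close> turns the chain conditions into the bounds
  \<open>k t \<le> \<alpha>\<^sub>t + m * k (t + 1)\<close> of the nested sum.
\<close>

definition power_multiplicities :: "nat \<Rightarrow> nat \<Rightarrow> nat \<Rightarrow> (nat \<Rightarrow> nat) set" where
  "power_multiplicities m j n = {c. (\<forall>i>j. c i = 0) \<and> (\<Sum>i\<le>j. c i * m ^ i) = n}"

definition power_multiset :: "nat \<Rightarrow> nat \<Rightarrow> (nat \<Rightarrow> nat) \<Rightarrow> nat multiset" where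
  "power_multiset m j c = (\<Sum>i\<le>j. replicate_mset (c i) (m ^ i))"

lemma sum_mset_power_multiset: "sum_mset (power_multiset m j c) = (\<Sum>i\<le>j. c i * m ^ i)"
  unfolding power_multiset_def by (induction j) auto

lemma count_power_multiset:
  assumes "1 < m"
  shows "count (power_multiset m j c) (m ^ t) = (if t \<le> j then c t else 0)"
proof -
  have "count (power_multiset m j c) (m ^ t) = (\<Sum>i\<le>j. if i = t then c i else 0)"
    unfolding power_multiset_def count_sum
    using assms by (intro sum.cong) (auto simp: power_inject_exp)
  then show ?thesis by (simp add: sum.delta)
qed

lemma set_mset_power_multiset: "set_mset (power_multiset m j c) \<subseteq> range (\<lambda>i. m ^ i)"
  unfolding power_multiset_def by (auto simp: set_mset_sum split: if_splits)

lemma m_ary_partition_part_exponent_le: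
  assumes "1 < m" "n < m ^ (j + 1)" "P \<in> m_ary_partitions m n" "m ^ i \<in># P"
  shows "i \<le> j"
proof -
  obtain Q where "P = add_mset (m ^ i) Q"
    using assms(4) by (blast dest: multi_member_split)
  then have "m ^ i \<le> n"
    using assms(3) by (simp add: m_ary_partitions_def)
  then have "m ^ i < m ^ (j + 1)" using assms(2) by linarith
  then show ?thesis using assms(1) power_strict_increasing_iff[of m i "j + 1"] by simp
qed

lemma power_multiset_count_eq:
  assumes "1 < m" "n < m ^ (j + 1)" "P \<in> m_ary_partitions m n"
  shows "power_multiset m j (\<lambda>i. if i \<le> j then count P (m ^ i) else 0) = P"
proof (rule multiset_eqI)
  fix x
  show "count (power_multiset m j (\<lambda>i. if i \<le> j then count P (m ^ i) else 0)) x = count P x"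
  proof (cases "x \<in> range (\<lambda>i. m ^ i)")
    case True
    then obtain i where "x = m ^ i" by blast
    then show ?thesis
      using m_ary_partition_part_exponent_le[OF assms, of i] assms(1)
      by (auto simp: count_power_multiset count_eq_zero_iff)
  next
    case False
    then have "x \<notin># P" using assms(3) by (auto simp: m_ary_partitions_def)
    moreover have "x \<notin># power_multiset m j (\<lambda>i. if i \<le> j then count P (m ^ i) else 0)"
      using False set_mset_power_multiset by blast
    ultimately show ?thesis by (simp add: not_in_iff)
  qed
qed

lemma b_eq_card_power_multiplicities:
  assumes "1 < m" "n < m ^ (j + 1)"
  shows "b m n = card (power_multiplicities m j n)"
  unfolding b_def
proof (rule bij_betw_same_card[OF bij_betw_byWitness[where f' = "power_multiset m j"]])
  let ?count = "\<lambda>P i. if i \<le> j then count P (m ^ i) else 0"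
  show "\<forall>P\<in>m_ary_partitions m n. power_multiset m j (?count P) = P"
    using power_multiset_count_eq[OF assms] by blast
  show "\<forall>c\<in>power_multiplicities m j n. ?count (power_multiset m j c) = c"
    using assms(1) by (auto simp: fun_eq_iff count_power_multiset power_multiplicities_def)
  show "?count ` m_ary_partitions m n \<subseteq> power_multiplicities m j n"
  proof
    fix c assume "c \<in> ?count ` m_ary_partitions m n"
    then obtain P where P: "P \<in> m_ary_partitions m n" and c: "c = ?count P" by blast
    have "(\<Sum>i\<le>j. c i * m ^ i) = sum_mset P"
      using power_multiset_count_eq[OF assms P] c by (metis sum_mset_power_multiset)
    then show "c \<in> power_multiplicities m j n"
      using P c by (simp add: power_multiplicities_def m_ary_partitions_def)
  qed
  show "power_multiset m j ` power_multiplicities m j n \<subseteq> m_ary_partitions m n"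
  proof
    fix P assume "P \<in> power_multiset m j ` power_multiplicities m j n"
    then obtain c where c: "c \<in> power_multiplicities m j n" and P: "P = power_multiset m j c"
      by blast
    have "\<forall>x\<in>#P. \<exists>i. x = m ^ i" using set_mset_power_multiset P by blast
    moreover have "sum_mset P = n"
      using c P by (simp add: sum_mset_power_multiset power_multiplicities_def)
    ultimately show "P \<in> m_ary_partitions m n" by (simp add: m_ary_partitions_def)
  qed
qed

definition tail_chains :: "nat \<Rightarrow> nat \<Rightarrow> nat \<Rightarrow> (nat \<Rightarrow> nat) set" where
  "tail_chains m j n = {K. (\<forall>t. t \<notin> {1..j} \<longrightarrow> K t = 0) \<and> m * K 1 \<le> n \<and>
                          (\<forall>t. 1 \<le> t \<and> t \<le> j - 1 \<longrightarrow> m * K (t + 1) \<le> K t)}"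

definition tail_value :: "nat \<Rightarrow> nat \<Rightarrow> (nat \<Rightarrow> nat) \<Rightarrow> nat \<Rightarrow> nat" where
  "tail_value m j c t = (\<Sum>i\<in>{t..j}. c i * m ^ (i - t))"

definition chain_multiplicities :: "nat \<Rightarrow> nat \<Rightarrow> nat \<Rightarrow> (nat \<Rightarrow> nat) \<Rightarrow> nat \<Rightarrow> nat" where
  "chain_multiplicities m j n K i =
     (if i = 0 then n - m * K 1 else if i \<le> j then K i - m * K (i + 1) else 0)"

lemma tail_value_rec:
  assumes "t \<le> j"
  shows "tail_value m j c t = c t + m * tail_value m j c (t + 1)"
proof -
  have "tail_value m j c t = c t + (\<Sum>i\<in>{Suc t..j}. c i * m ^ (i - t))"
    using assms unfolding tail_value_def by (simp add: sum.atLeast_Suc_atMost)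
  also have "(\<Sum>i\<in>{Suc t..j}. c i * m ^ (i - t)) =
             (\<Sum>i\<in>{Suc t..j}. m * (c i * m ^ (i - Suc t)))"
  proof (intro sum.cong refl)
    fix i assume "i \<in> {Suc t..j}"
    then have "i - t = Suc (i - Suc t)" by auto
    then show "c i * m ^ (i - t) = m * (c i * m ^ (i - Suc t))" by simp
  qed
  finally show ?thesis by (simp add: tail_value_def sum_distrib_left)
qed

lemma tail_value_beyond: "j < t \<Longrightarrow> tail_value m j c t = 0"
  by (simp add: tail_value_def)

lemma tail_value_0: "tail_value m j c 0 = (\<Sum>i\<le>j. c i * m ^ i)"
  by (simp add: tail_value_def atLeast0AtMost)

lemma tail_value_chain_multiplicities:
  assumes K: "K \<in> tail_chains m j n" and "1 \<le> t"
  shows "tail_value m j (chain_multiplicities m j n K) t = K t"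
proof (cases "t \<le> j + 1")
  case True
  then show ?thesis
  proof (induction t rule: inc_induct)
    case base
    show ?case using K by (simp add: tail_value_beyond tail_chains_def)
  next
    case (step u)
    have u: "1 \<le> u" "u \<le> j" using step.hyps \<open>1 \<le> t\<close> by auto
    then have "m * K (u + 1) \<le> K u"
      using K by (cases "u = j") (auto simp: tail_chains_def)
    then show ?case
      using u step.IH by (simp add: tail_value_rec chain_multiplicities_def)
  qed
next
  case False
  then show ?thesis using K by (simp add: tail_value_beyond tail_chains_def)
qed

lemma card_power_multiplicities_eq_card_tail_chains:
  "card (power_multiplicities m j n) = card (tail_chains m j n)"
proof (rule bij_betw_same_card[OF bij_betw_byWitness[where f' = "chain_multiplicities m j n"]])
  let ?tails = "\<lambda>c t. if t = 0 then 0 else tail_value m j c t"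
  have total: "c 0 + m * tail_value m j c 1 = n" if "c \<in> power_multiplicities m j n" for c
    using that tail_value_rec[of 0 j m c] by (simp add: tail_value_0 power_multiplicities_def)
  show "\<forall>c\<in>power_multiplicities m j n. chain_multiplicities m j n (?tails c) = c"
  proof
    fix c assume c: "c \<in> power_multiplicities m j n"
    show "chain_multiplicities m j n (?tails c) = c"
      using total[OF c] c tail_value_rec[of _ j m c]
      by (auto simp: fun_eq_iff chain_multiplicities_def power_multiplicities_def)
  qed
  show "\<forall>K\<in>tail_chains m j n. ?tails (chain_multiplicities m j n K) = K"
    using tail_value_chain_multiplicities by (auto simp: fun_eq_iff tail_chains_def)
  show "?tails ` power_multiplicities m j n \<subseteq> tail_chains m j n"
    using total tail_value_rec
    by (fastforce simp: tail_chains_def tail_value_beyond)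
  show "chain_multiplicities m j n ` tail_chains m j n \<subseteq> power_multiplicities m j n"
  proof
    fix c assume "c \<in> chain_multiplicities m j n ` tail_chains m j n"
    then obtain K where K: "K \<in> tail_chains m j n" and c: "c = chain_multiplicities m j n K"
      by blast
    have "(\<Sum>i\<le>j. c i * m ^ i) = c 0 + m * tail_value m j c 1"
      by (simp add: tail_value_rec flip: tail_value_0)
    also have "\<dots> = n"
      using K c tail_value_chain_multiplicities[OF K, of 1]
      by (simp add: chain_multiplicities_def tail_chains_def)
    finally show "c \<in> power_multiplicities m j n"
      using c by (simp add: power_multiplicities_def chain_multiplicities_def)
  qed
qed

definition digit_tuples :: "nat \<Rightarrow> nat \<Rightarrow> nat \<Rightarrow> (nat \<Rightarrow> nat) set" where
  "digit_tuples m j n = {k. (\<forall>t. t \<notin> {1..j} \<longrightarrow> k t = 0) \<and> k j \<le> digit m n j \<and>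
                          (\<forall>t. 1 \<le> t \<and> t \<le> j - 1 \<longrightarrow> k t \<le> digit m n t + m * k (t + 1))}"

lemma div_power_digit_rec: "n div m ^ t = digit m n t + m * (n div m ^ (t + 1))"
proof -
  have "n div m ^ (t + 1) = n div m ^ t div m"
    by (metis div_mult2_eq power_Suc2 Suc_eq_plus1)
  then show ?thesis
    unfolding digit_def by (metis mod_mult_div_eq add.commute)
qed

lemma digit_top:
  assumes "n < m ^ (j + 1)"
  shows "digit m n j = n div m ^ j"
proof -
  have "0 < m" using assms by (cases m) auto
  then have "n div m ^ j < m"
    using assms by (simp add: div_less_iff_less_mult mult.commute)
  then show ?thesis by (simp add: digit_def)
qed

lemma tail_chain_le_div_power:
  assumes "0 < m" "K \<in> tail_chains m j n" "1 \<le> t" "t \<le> j"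
  shows "K t \<le> n div m ^ t"
  using assms(3,4)
proof (induction t rule: dec_induct)
  case base
  then show ?case
    using assms(1,2) by (simp add: tail_chains_def less_eq_div_iff_mult_less_eq mult.commute)
next
  case (step u)
  then have "m * K (u + 1) \<le> n div m ^ u"
    using assms(2) by (fastforce simp: tail_chains_def)
  then show ?case
    using assms(1) by (simp add: less_eq_div_iff_mult_less_eq div_mult2_eq ac_simps)
qed

lemma digit_tuple_le_div_power:
  assumes "n < m ^ (j + 1)" "k \<in> digit_tuples m j n" "1 \<le> t" "t \<le> j"
  shows "k t \<le> n div m ^ t"
  using assms(4)
proof (induction t rule: inc_induct)
  case base
  then show ?case using assms(2) digit_top[OF assms(1)] by (simp add: digit_tuples_def)
next
  case (step u)
  then have "k u \<le> digit m n u + m * k (u + 1)"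
    using assms(2,3) by (simp add: digit_tuples_def)
  also have "\<dots> \<le> digit m n u + m * (n div m ^ (u + 1))"
    using step.IH by simp
  finally show ?case by (simp add: div_power_digit_rec[of n m u])
qed

lemma complement_step_iff:
  fixes N N' K K' a m :: nat
  assumes "N = a + m * N'" "K \<le> N" "K' \<le> N'"
  shows "m * K' \<le> K \<longleftrightarrow> N - K \<le> a + m * (N' - K')"
proof -
  have "m * K' \<le> m * N'" using assms(3) by simp
  moreover have "m * (N' - K') = m * N' - m * K'" by (simp add: diff_mult_distrib2)
  ultimately show ?thesis using assms(1,2) by linarith
qed

lemma card_tail_chains_eq_card_digit_tuples:
  assumes m: "0 < m" and n: "n < m ^ (j + 1)"
  shows "card (tail_chains m j n) = card (digit_tuples m j n)"
proof -
  define h where "h K t = (if 1 \<le> t \<and> t \<le> j then n div m ^ t - K t else 0)" for K t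
  note L_bound = tail_chain_le_div_power[OF m] and T_bound = digit_tuple_le_div_power[OF n]
  have step_iff: "m * K (t + 1) \<le> K t \<longleftrightarrow> h K t \<le> digit m n t + m * h K (t + 1)"
    if "1 \<le> t" "t \<le> j - 1" "K t \<le> n div m ^ t" "K (t + 1) \<le> n div m ^ (t + 1)" for K t
    using that complement_step_iff[OF div_power_digit_rec[of n m t]] by (simp add: h_def)
  show ?thesis
  proof (rule bij_betw_same_card[OF bij_betw_byWitness[where f' = h]])
    show "\<forall>K\<in>tail_chains m j n. h (h K) = K"
      using L_bound by (auto simp: fun_eq_iff h_def tail_chains_def)
    show "\<forall>k\<in>digit_tuples m j n. h (h k) = k"
      using T_bound by (auto simp: fun_eq_iff h_def digit_tuples_def)
    show "h ` tail_chains m j n \<subseteq> digit_tuples m j n"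
    proof
      fix k assume "k \<in> h ` tail_chains m j n"
      then obtain K where K: "K \<in> tail_chains m j n" and k: "k = h K" by blast
      have "k j \<le> digit m n j" using k digit_top[OF n] by (simp add: h_def)
      moreover have "k t \<le> digit m n t + m * k (t + 1)" if "1 \<le> t" "t \<le> j - 1" for t
        using that K k step_iff[of t K] L_bound[OF K, of t] L_bound[OF K, of "t + 1"]
        by (simp add: tail_chains_def)
      ultimately show "k \<in> digit_tuples m j n" using k by (simp add: digit_tuples_def h_def)
    qed
    show "h ` digit_tuples m j n \<subseteq> tail_chains m j n"
    proof
      fix K assume "K \<in> h ` digit_tuples m j n"
      then obtain k where k: "k \<in> digit_tuples m j n" and K: "K = h k" by blast
      have "m * K 1 \<le> m * (n div m)" using K by (simp add: h_def)
      also have "\<dots> \<le> n" by (metis div_times_less_eq_dividend mult.commute)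
      finally have "m * K 1 \<le> n" .
      moreover have "m * K (t + 1) \<le> K t" if "1 \<le> t" "t \<le> j - 1" for t
      proof -
        have "h K t = k t" "h K (t + 1) = k (t + 1)"
          using that K T_bound[OF k, of t] T_bound[OF k, of "t + 1"] by (auto simp: h_def)
        then show ?thesis
          using that k K step_iff[of t K] by (simp add: digit_tuples_def h_def)
      qed
      ultimately show "K \<in> tail_chains m j n" using K by (simp add: tail_chains_def h_def)
    qed
  qed
qed

lemma digit_tuples_0: "digit_tuples m 0 n = {\<lambda>_. 0}"
  by (auto simp: digit_tuples_def fun_eq_iff)

theorem theorem1p2:
  fixes m n j :: nat
  assumes "m \<ge> 2" and "n > 0" and "m ^ j \<le> n" and "n < m ^ (j + 1)"
  shows "b m n = card {k :: nat \<Rightarrow> nat.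
            (\<forall>t. t \<notin> {1..j} \<longrightarrow> k t = 0) \<and>
            k j \<le> digit m n j \<and>
            (\<forall>t. 1 \<le> t \<and> t \<le> j - 1 \<longrightarrow> k t \<le> digit m n t + m * k (t + 1))}
       \<and> (j = 0 \<longrightarrow> b m n = 1)"
proof -
  have "b m n = card (power_multiplicities m j n)"
    using assms(1,4) by (simp add: b_eq_card_power_multiplicities)
  also have "\<dots> = card (tail_chains m j n)"
    by (rule card_power_multiplicities_eq_card_tail_chains)
  also have "\<dots> = card (digit_tuples m j n)"
    using assms(1,4) by (simp add: card_tail_chains_eq_card_digit_tuples)
  finally have "b m n = card (digit_tuples m j n)" .
  then show ?thesis
    using digit_tuples_0 unfolding digit_tuples_def by auto
qed

end
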